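(* Let $n\ge 2$ and $L=2^n+k$ with $0\le k<2^n$. (i) If $0\le k<2^{n-1}$, then among the words of length $L$ in $\mathrm{Sub}_\tau$ there are exactly two right-special words: the suffix of length $L$ of $\tau^n(a)$, whose extensions are by $x$, $y$ and $z$; and the suffix of length $L$ of the word $\tau^{n-2}(a)\,\tau^{n-2}(x)\,\tau^{n-1}(a)$, whose extensions are by $\tau^{n-2}(x)$ and by $\tau^{n-1}(x)$. (ii) If $2^{n-1}\le k<2^n$, then there is exactly one right-special word of length $L$ in $\mathrm{Sub}_\tau$, namely the suffix of length $L$ of $\tau^n(a)$, whose extensions are by $x$, $y$ and $z$.
   Context: Let $\mathcal{A}=\{a,x,y,z\}$ and let $\tau$ be the substitution (monoid morphism on finite words over $\mathcal{A}$) defined by $\tau(a)=axa$, $\tau(x)=y$, $\tau(y)=z$, $\tau(z)=x$; thus $\tau^m(x)$ equals $x$, $y$, $z$ according as $m\equiv 0,1,2 \pmod 3$. For a finite word $w$, $\mathrm{Sub}(w)$ denotes the set of finite (contiguous) subwords of $w$. Let $\mathrm{Sub}_\tau=\bigcup_{s\in\mathcal{A},\,n\in\mathbb{N}\cup\{0\}}\mathrm{Sub}(\tau^n(s))$. For $w\in\mathrm{Sub}_\tau$ and $s\in\mathcal{A}$, $w$ can be extended by $s$ if $ws\in\mathrm{Sub}_\tau$. A word $w\in\mathrm{Sub}_\tau$ is right-special if it can be extended by more than one letter of $\mathcal{A}$. *)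

theory Defs
  imports Main "HOL-Library.Sublist"
begin

datatype letter = A | X | Y | Z

fun tau_letter :: "letter \<Rightarrow> letter list" where
  "tau_letter A = [A, X, A]"
| "tau_letter X = [Y]"
| "tau_letter Y = [Z]"
| "tau_letter Z = [X]"

definition tau :: "letter list \<Rightarrow> letter list" where
  "tau w = concat (map tau_letter w)"

definition Sub_tau :: "letter list set" where
  "Sub_tau = {w. \<exists>s n. sublist w ((tau ^^ n) [s])}"

definition extensions :: "letter list \<Rightarrow> letter set" where
  "extensions w = {s. w @ [s] \<in> Sub_tau}"

definition right_special :: "letter list \<Rightarrow> bool" where
  "right_special w \<longleftrightarrow> w \<in> Sub_tau \<and> (\<exists>s t. s \<noteq> t \<and> s \<in> extensions w \<and> t \<in> extensions w)"

definition suffix_len :: "nat \<Rightarrow> 'a list \<Rightarrow> 'a list" where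
  "suffix_len L u = drop (length u - L) u"

end

(* The fixed point of tau carries A at every odd position and sigma (omega p) at position 2 p,
   where sigma cycles X, Y, Z and sends A to X. A factor of length at least 3 determines the
   parity of its position, so a factor of length 2 L + b that ends before an even position 2 e is
   the image of the factor of length L ending before e under c |-> sigma c A (preceded by one A
   if b = 1), and its extensions are the sigma-images of those of the shorter factor.
   Right-special factors always end before even positions, as otherwise their only extension
   is A. Halving the length therefore carries right-special factors and their extensions from
   length L to length 2 L + b, and everything reduces to the lengths 4 to 7, which are settled
   by evaluation because every factor of length at most 8 occurs among the first 40 letters. *)

theory Submission
  imports Defs
begin

(* tau [c] = [sigma c] for c \<noteq> A, and sigma A = X is the middle letter of tau [A]. *)
fun sigma :: "letter \<Rightarrow> letter" where
  "sigma A = X" | "sigma X = Y" | "sigma Y = Z" | "sigma Z = X"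

lemma sigma_neq_A [simp]: "sigma c \<noteq> A"
  by (cases c) auto

lemma funpow_sigma_neq_A: "c \<noteq> A \<Longrightarrow> (sigma ^^ n) c \<noteq> A"
  by (induction n) auto

lemma sigma_eq_iff: "c \<noteq> A \<Longrightarrow> d \<noteq> A \<Longrightarrow> sigma c = sigma d \<longleftrightarrow> c = d"
  by (cases c; cases d) auto

lemma sigma_eq_X_iff: "sigma c = X \<longleftrightarrow> c = A \<or> c = Z"
  by (cases c) auto

lemma sigma_eq_Z_iff: "sigma c = Z \<longleftrightarrow> c = Y"
  by (cases c) auto

(* omega p is the p-th letter, counting from 1, of the fixed point of tau; omega 0 = A is junk. *)
function omega :: "nat \<Rightarrow> letter" where
  "omega p = (if p = 0 \<or> odd p then A else sigma (omega (p div 2)))"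
  by auto
termination by (relation "measure id") auto

declare omega.simps [simp del]

lemma omega_0 [simp]: "omega 0 = A"
  by (simp add: omega.simps)

lemma omega_odd: "odd p \<Longrightarrow> omega p = A"
  by (simp add: omega.simps)

lemma omega_double: "0 < p \<Longrightarrow> omega (2 * p) = sigma (omega p)"
  by (subst omega.simps) simp

lemma omega_eq_A_iff: "0 < p \<Longrightarrow> omega p = A \<longleftrightarrow> odd p"
  by (cases "odd p") (auto simp: omega_odd omega_double elim!: evenE)

lemma omega_pow2: "omega (2 ^ N) = (sigma ^^ N) A"
  by (induction N) (simp_all add: omega_odd omega_double)

lemma omega_periodic: "0 < i \<Longrightarrow> i < 2 ^ N \<Longrightarrow> omega (2 ^ N * t + i) = omega i"
proof (induction N arbitrary: i)
  case (Suc N)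
  show ?case
  proof (cases "odd i")
    case True
    then show ?thesis by (simp add: omega_odd)
  next
    case False
    then obtain j where j: "i = 2 * j" by blast
    with Suc.prems have "0 < j" "j < 2 ^ N" by auto
    have double: "2 ^ Suc N * t + i = 2 * (2 ^ N * t + j)" using j by simp
    have "omega (2 ^ Suc N * t + i) = sigma (omega (2 ^ N * t + j))"
      unfolding double using \<open>0 < j\<close> by (intro omega_double) simp
    also have "\<dots> = sigma (omega j)" using Suc.IH[OF \<open>0 < j\<close> \<open>j < 2 ^ N\<close>] by simp
    also have "\<dots> = omega i" using j \<open>0 < j\<close> by (simp add: omega_double)
    finally show ?thesis .
  qed
qed simp

lemma omega_eq_Z_imp_4_dvd: "omega p = Z \<Longrightarrow> 4 dvd p"
proof -
  assume Z: "omega p = Z"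
  then have "0 < p" "even p" using omega_odd[of p] by (auto intro: gr0I)
  then obtain q where q: "p = 2 * q" "0 < q" by auto
  with Z have "omega q = Y" by (simp add: omega_double sigma_eq_Z_iff)
  then have "even q" using omega_odd[of q] by auto
  with q show ?thesis by auto
qed

(* The factor omega (e - L) ... omega (e - 1), indexed by the position e of the letter that
   would extend it; this occurrence avoids the junk position 0 iff L < e. *)
definition factor_before :: "nat \<Rightarrow> nat \<Rightarrow> letter list" where
  "factor_before e L = map omega [e - L..<e]"

lemma length_factor_before [simp]: "length (factor_before e L) = min L e"
  by (simp add: factor_before_def)

lemma factor_before_Suc: "factor_before (Suc e) (Suc L) = factor_before e L @ [omega e]"
  by (simp add: factor_before_def)

lemma factor_before_append:
  "L \<le> e \<Longrightarrow> factor_before e L @ factor_before (e + M) M = factor_before (e + M) (L + M)"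
  by (simp add: factor_before_def upt_add_eq_append[of "e - L" e M])

lemma factor_before_eq_iff:
  "L \<le> e \<Longrightarrow> L \<le> f \<Longrightarrow>
    factor_before e L = factor_before f L \<longleftrightarrow> (\<forall>i<L. omega (e - L + i) = omega (f - L + i))"
  by (simp add: factor_before_def list_eq_iff_nth_eq)

lemma suffix_len_factor_before:
  "L \<le> M \<Longrightarrow> M \<le> e \<Longrightarrow> suffix_len L (factor_before e M) = factor_before e L"
  by (simp add: suffix_len_def factor_before_def drop_map)

lemma factor_before_periodic:
  "0 < t \<Longrightarrow> factor_before (2 ^ N * t) (2 ^ N - 1) = factor_before (2 ^ N) (2 ^ N - 1)"
proof -
  assume "0 < t"
  have "omega (2 ^ N * t - (2 ^ N - 1) + i) = omega (2 ^ N - (2 ^ N - 1) + i)" if "i < 2 ^ N - 1" for i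
  proof -
    have "2 ^ N * t - (2 ^ N - 1) + i = 2 ^ N * (t - 1) + (Suc i)"
      using \<open>0 < t\<close> that by (cases t) (simp_all add: algebra_simps)
    then show ?thesis using omega_periodic[of "Suc i" N "t - 1"] that by simp
  qed
  moreover have "2 ^ N - 1 \<le> 2 ^ N * t" using \<open>0 < t\<close> by (cases t) auto
  ultimately show ?thesis by (simp add: factor_before_eq_iff)
qed

lemma tau_append [simp]: "tau (u @ v) = tau u @ tau v"
  by (simp add: tau_def)

lemma funpow_tau_append: "(tau ^^ n) (u @ v) = (tau ^^ n) u @ (tau ^^ n) v"
  by (induction n) auto

lemma funpow_tau_non_A: "c \<noteq> A \<Longrightarrow> (tau ^^ n) [c] = [(sigma ^^ n) c]"
proof (induction n)
  case (Suc n)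
  then have "(sigma ^^ n) c \<noteq> A" by (simp add: funpow_sigma_neq_A)
  with Suc show ?case by (cases "(sigma ^^ n) c") (simp_all add: tau_def)
qed simp

lemma funpow_tau_A: "(tau ^^ n) [A] = factor_before (2 ^ (n + 1)) (2 ^ (n + 1) - 1)"
proof (induction n)
  case 0
  then show ?case by (simp add: factor_before_def omega_odd numeral_2_eq_2)
next
  case (Suc n)
  define M :: nat where "M = 2 ^ (n + 1)"
  have "1 \<le> M" by (simp add: M_def)
  have left: "(tau ^^ n) [A] = factor_before M (M - 1)"
    using Suc.IH by (simp only: M_def)
  have middle: "(tau ^^ n) [X] = [omega M]"
    using omega_pow2[of "n + 1"] by (simp add: M_def funpow_tau_non_A funpow_Suc_right del: funpow.simps)
  have right: "(tau ^^ n) [A] = factor_before (M + 1 + (M - 1)) (M - 1)"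
    using left factor_before_periodic[of 2 "n + 1"] \<open>1 \<le> M\<close> by (simp add: M_def mult_2_right)
  have "(tau ^^ Suc n) [A] = (tau ^^ n) [A] @ (tau ^^ n) [X] @ (tau ^^ n) [A]"
    using funpow_tau_append[of n "[A]" "[X] @ [A]"] funpow_tau_append[of n "[X]" "[A]"]
    by (simp add: funpow_Suc_right tau_def del: funpow.simps)
  also have "\<dots> = factor_before (M + 1) M @ factor_before (M + 1 + (M - 1)) (M - 1)"
    using left middle right factor_before_Suc[of M "M - 1"] \<open>1 \<le> M\<close> by simp
  also have "\<dots> = factor_before (2 ^ (Suc n + 1)) (2 ^ (Suc n + 1) - 1)"
    using \<open>1 \<le> M\<close> by (subst factor_before_append) (simp_all add: M_def)
  finally show ?case .
qed

lemma sublist_map_upt: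
  "sublist w (map f [a..<b]) \<Longrightarrow> \<exists>c\<ge>a. w = map f [c..<c + length w]"
proof -
  assume "sublist w (map f [a..<b])"
  then obtain ps ss where split: "map f [a..<b] = ps @ w @ ss" by (auto simp: sublist_def)
  have len: "length ps + length w \<le> b - a" using arg_cong[OF split, of length] by simp
  have "w = take (length w) (drop (length ps) (map f [a..<b]))" using split by simp
  also have "\<dots> = map f [a + length ps..<a + length ps + length w]"
    using len by (cases "a \<le> b") (simp_all add: take_map drop_map)
  finally show ?thesis by (intro exI[of _ "a + length ps"]) simp
qed

lemma sublist_letter_funpow_tau_A: "sublist [c] ((tau ^^ 3) [A])"
  by (cases c) (simp_all add: tau_def numeral_eq_Suc sublist_Cons_right)

lemma Sub_tau_iff: "w \<in> Sub_tau \<longleftrightarrow> (\<exists>e>length w. factor_before e (length w) = w)"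
proof
  assume "w \<in> Sub_tau"
  then obtain s n where "sublist w ((tau ^^ n) [s])" by (auto simp: Sub_tau_def)
  then obtain N where "sublist w ((tau ^^ N) [A])"
  proof (cases "s = A")
    case False
    then have "sublist w [(sigma ^^ n) s]" using \<open>sublist w ((tau ^^ n) [s])\<close>
      by (simp add: funpow_tau_non_A)
    then have "sublist w ((tau ^^ 3) [A])"
      using sublist_letter_funpow_tau_A sublist_order.order.trans by blast
    then show ?thesis by (rule that)
  qed (use that in blast)
  then have "sublist w (map omega [1..<2 ^ (N + 1)])"
    by (simp add: funpow_tau_A factor_before_def)
  then obtain c where "1 \<le> c" "w = map omega [c..<c + length w]"
    using sublist_map_upt by blast
  then show "\<exists>e>length w. factor_before e (length w) = w"
    by (intro exI[of _ "c + length w"]) (simp add: factor_before_def)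
next
  assume "\<exists>e>length w. factor_before e (length w) = w"
  then obtain e where e: "length w < e" "factor_before e (length w) = w" by blast
  define E :: nat where "E = 2 ^ (e + 1)"
  have "e < E" unfolding E_def using less_exp[of "e + 1"] by simp
  have "[1..<E] = [1..<e - length w] @ [e - length w..<e] @ [e..<E]"
    using e(1) \<open>e < E\<close> upt_add_eq_append[of 1 "e - length w" "E - (e - length w)"]
      upt_add_eq_append[of "e - length w" e "E - e"] by simp
  then have "sublist w (map omega [1..<E])"
    using e(2) by (simp add: factor_before_def)
  then have "sublist w ((tau ^^ e) [A])" by (simp add: funpow_tau_A factor_before_def E_def)
  then show "w \<in> Sub_tau" by (auto simp: Sub_tau_def)
qed

lemma factor_before_in_Sub_tau: "L < e \<Longrightarrow> factor_before e L \<in> Sub_tau"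
  by (auto simp: Sub_tau_iff)

lemma extensions_eq:
  "extensions w = {omega e | e. length w < e \<and> factor_before e (length w) = w}"
proof -
  have "w @ [s] \<in> Sub_tau \<longleftrightarrow> (\<exists>e. length w < e \<and> factor_before e (length w) = w \<and> s = omega e)"
    for s
  proof -
    have "w @ [s] \<in> Sub_tau \<longleftrightarrow>
        (\<exists>e. Suc (length w) < Suc e \<and> w @ [s] = factor_before (Suc e) (Suc (length w)))"
      unfolding Sub_tau_iff by (auto simp: Suc_less_eq2)
    then show ?thesis by (auto simp: factor_before_Suc)
  qed
  then show ?thesis by (auto simp: extensions_def)
qed

lemma right_special_iff:
  "right_special w \<longleftrightarrow> (\<exists>s t. s \<noteq> t \<and> s \<in> extensions w \<and> t \<in> extensions w)"
  unfolding right_special_def by (auto simp: extensions_eq Sub_tau_iff)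

lemma factor_before_eq_imp_even_iff:
  assumes "factor_before e L = factor_before f L" "0 < L" "L < e" "L < f"
  shows "even e \<longleftrightarrow> even f"
proof -
  have "omega (e - 1) = omega (f - 1)"
    using assms factor_before_eq_iff[of L e f] by (auto dest: spec[of _ "L - 1"])
  moreover have "0 < e - 1" "0 < f - 1" using assms(2-4) by auto
  ultimately have "odd (e - 1) \<longleftrightarrow> odd (f - 1)" by (metis omega_eq_A_iff)
  then show ?thesis using assms(2-4) by auto
qed

lemma inj_on_sigma_extensions: "w \<noteq> [] \<Longrightarrow> inj_on sigma (extensions w)"
proof (rule inj_onI)
  fix s t assume "w \<noteq> []" "s \<in> extensions w" "t \<in> extensions w" "sigma s = sigma t"
  then obtain e f where ef: "s = omega e" "t = omega f" "length w < e" "length w < f"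
    "factor_before e (length w) = w" "factor_before f (length w) = w"
    by (auto simp: extensions_eq)
  then have "even e \<longleftrightarrow> even f"
    using \<open>w \<noteq> []\<close> factor_before_eq_imp_even_iff[of e "length w" f] by auto
  then show "s = t"
    using ef(1-4) \<open>sigma s = sigma t\<close> omega_eq_A_iff[of e] omega_eq_A_iff[of f] sigma_eq_iff
    by (cases "even e") (auto simp: omega_odd)
qed

lemma right_special_imp_even:
  assumes "right_special w" "w \<noteq> []"
  shows "\<exists>e. even e \<and> length w < e \<and> factor_before e (length w) = w"
proof -
  obtain s t where "s \<noteq> t" "s \<in> extensions w" "t \<in> extensions w"
    using assms(1) by (auto simp: right_special_iff)
  then obtain e f where ef: "omega e \<noteq> omega f" "length w < e" "length w < f"
    "factor_before e (length w) = w" "factor_before f (length w) = w"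
    unfolding extensions_eq by blast
  then have "even e \<longleftrightarrow> even f"
    using \<open>w \<noteq> []\<close> factor_before_eq_imp_even_iff[of e "length w" f] by auto
  then have "even e" using ef(1) omega_odd[of e] omega_odd[of f] by auto
  with ef show ?thesis by metis
qed

definition inflate :: "nat \<Rightarrow> letter list \<Rightarrow> letter list" where
  "inflate b w = replicate b A @ concat (map (\<lambda>c. [sigma c, A]) w)"

lemma length_inflate [simp]: "length (inflate b w) = 2 * length w + b"
  by (induction w) (simp_all add: inflate_def)

lemma inflate_snoc: "inflate b (w @ [c]) = inflate b w @ [sigma c, A]"
  by (simp add: inflate_def)

lemma inflate_eq_iff: "inflate b u = inflate b v \<longleftrightarrow> map sigma u = map sigma v"
proof -
  have "concat (map (\<lambda>c. [sigma c, A]) u) = concat (map (\<lambda>c. [sigma c, A]) v) \<longleftrightarrow>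
      map sigma u = map sigma v"
  proof (induction u arbitrary: v)
    case Nil
    then show ?case by (cases v) auto
  next
    case (Cons c u)
    then show ?case by (cases v) auto
  qed
  then show ?thesis by (simp add: inflate_def)
qed

lemma factor_before_double:
  "L < e \<Longrightarrow> b \<le> 1 \<Longrightarrow> factor_before (2 * e) (2 * L + b) = inflate b (factor_before e L)"
proof (induction L arbitrary: e)
  case 0
  then show ?case by (cases b) (auto simp: factor_before_def inflate_def upt_rec omega_odd)
next
  case (Suc L)
  then obtain e' where e: "e = Suc e'" "L < e'" by (cases e) auto
  have "factor_before (2 * e) (2 * Suc L + b) =
      factor_before (2 * e') (2 * L + b) @ [omega (2 * e'), omega (Suc (2 * e'))]"
    using e by (simp add: factor_before_Suc)
  also have "\<dots> = inflate b (factor_before e' L) @ [sigma (omega e'), A]"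
    using Suc e by (simp add: omega_double omega_odd)
  also have "\<dots> = inflate b (factor_before e (Suc L))"
    using e by (simp add: factor_before_Suc inflate_snoc)
  finally show ?case .
qed

(* sigma identifies only A and Z, and Z occurs only at multiples of 4. *)
lemma odd_if_sigma_omega_eq:
  assumes "odd p" "0 < q" "sigma (omega p) = sigma (omega q)" "sigma (omega (p + 2)) = sigma (omega (q + 2))"
  shows "odd q"
proof (rule ccontr)
  assume "\<not> odd q"
  then have "omega q \<noteq> A" "omega (q + 2) \<noteq> A" using \<open>0 < q\<close> by (simp_all add: omega_eq_A_iff)
  moreover have "sigma (omega q) = X" "sigma (omega (q + 2)) = X"
    using assms by (simp_all add: omega_odd)
  ultimately have "omega q = Z" "omega (q + 2) = Z" by (simp_all add: sigma_eq_X_iff)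
  then have "4 dvd q" "4 dvd q + 2" by (simp_all add: omega_eq_Z_imp_4_dvd)
  then show False by presburger
qed

lemma map_sigma_factor_before_inj:
  assumes "3 \<le> L" "L < e" "L < f" "map sigma (factor_before e L) = map sigma (factor_before f L)"
  shows "factor_before e L = factor_before f L"
proof -
  define p q where "p = e - L" and "q = f - L"
  have "0 < p" "0 < q" using assms(2,3) by (simp_all add: p_def q_def)
  have sigma_eq: "sigma (omega (p + i)) = sigma (omega (q + i))" if "i < L" for i
    using arg_cong[OF assms(4), of "\<lambda>xs. xs ! i"] that assms(2,3) by (simp add: factor_before_def p_def q_def)
  have "odd p \<longleftrightarrow> odd q"
    using odd_if_sigma_omega_eq[of p q] odd_if_sigma_omega_eq[of q p] sigma_eq[of 0] sigma_eq[of 2]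
      assms(1) \<open>0 < p\<close> \<open>0 < q\<close> by auto
  then have "omega (p + i) = omega (q + i)" if "i < L" for i
    using sigma_eq[OF that] \<open>0 < p\<close> \<open>0 < q\<close> omega_eq_A_iff[of "p + i"] omega_eq_A_iff[of "q + i"]
    by (cases "odd (p + i)") (auto simp: omega_odd sigma_eq_iff)
  then show ?thesis using assms(2,3) by (simp add: factor_before_eq_iff p_def q_def)
qed

lemma extensions_inflate:
  assumes "3 \<le> length w" "b \<le> 1" "w \<in> Sub_tau"
  shows "extensions (inflate b w) = sigma ` extensions w"
proof
  define L where "L = length w"
  obtain e\<^sub>0 where e\<^sub>0: "L < e\<^sub>0" "factor_before e\<^sub>0 L = w"
    using assms(3) by (auto simp: Sub_tau_iff L_def)
  have inflated: "inflate b w = factor_before (2 * e\<^sub>0) (2 * L + b)"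
    using e\<^sub>0 assms(2) by (simp add: factor_before_double)
  show "extensions (inflate b w) \<subseteq> sigma ` extensions w"
  proof
    fix s assume "s \<in> extensions (inflate b w)"
    then obtain e where e: "2 * L + b < e" "factor_before e (2 * L + b) = inflate b w" "s = omega e"
      by (auto simp: extensions_eq L_def)
    moreover have "0 < 2 * L + b" "2 * L + b < 2 * e\<^sub>0" using assms(1,2) e\<^sub>0(1) by (auto simp: L_def)
    ultimately have "even e \<longleftrightarrow> even (2 * e\<^sub>0)"
      using inflated factor_before_eq_imp_even_iff[of e "2 * L + b" "2 * e\<^sub>0"] by simp
    then obtain f where f: "e = 2 * f" by auto
    with e(1) have "L < f" by simp
    then have "inflate b (factor_before f L) = inflate b (factor_before e\<^sub>0 L)"
      using e(2) f e\<^sub>0 assms(2) by (simp add: factor_before_double)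
    then have "factor_before f L = w"
      using map_sigma_factor_before_inj[of L f e\<^sub>0] \<open>L < f\<close> e\<^sub>0 assms(1)
      by (simp add: inflate_eq_iff L_def)
    then have "omega f \<in> extensions w" using \<open>L < f\<close> by (auto simp: extensions_eq L_def)
    moreover have "s = sigma (omega f)" using e(3) f \<open>L < f\<close> by (simp add: omega_double)
    ultimately show "s \<in> sigma ` extensions w" by blast
  qed
  show "sigma ` extensions w \<subseteq> extensions (inflate b w)"
  proof
    fix s assume "s \<in> sigma ` extensions w"
    then obtain f where f: "L < f" "factor_before f L = w" "s = sigma (omega f)"
      by (auto simp: extensions_eq L_def)
    then have "factor_before (2 * f) (2 * L + b) = inflate b w" "s = omega (2 * f)"
      using assms(2) by (simp_all add: factor_before_double omega_double)
    then show "s \<in> extensions (inflate b w)"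
      using f(1) assms(2) by (auto simp: extensions_eq L_def)
  qed
qed

lemma right_special_inflate_iff:
  assumes "3 \<le> length w" "b \<le> 1" "w \<in> Sub_tau"
  shows "right_special (inflate b w) \<longleftrightarrow> right_special w"
proof -
  have "inj_on sigma (extensions w)" using assms(1) by (intro inj_on_sigma_extensions) auto
  then show ?thesis
    unfolding right_special_iff extensions_inflate[OF assms] by (auto simp: inj_on_def) metis
qed

lemma right_special_words_inflate:
  assumes "3 \<le> L" "b \<le> 1"
  shows "{w'. length w' = 2 * L + b \<and> right_special w'} = inflate b ` {w. length w = L \<and> right_special w}"
proof (intro set_eqI iffI)
  fix w' assume "w' \<in> {w'. length w' = 2 * L + b \<and> right_special w'}"
  then have w': "length w' = 2 * L + b" "right_special w'" by auto
  moreover have "w' \<noteq> []" using w'(1) assms(1) by auto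
  ultimately obtain e where e: "even e" "2 * L + b < e" "factor_before e (2 * L + b) = w'"
    using right_special_imp_even[of w'] by auto
  then obtain f where f: "e = 2 * f" "L < f" by (auto elim!: evenE)
  define w where "w = factor_before f L"
  have "w \<in> Sub_tau" "length w = L" using f(2) by (simp_all add: factor_before_in_Sub_tau w_def)
  moreover have "w' = inflate b w" using e(3) f assms(2) by (simp add: factor_before_double w_def)
  ultimately show "w' \<in> inflate b ` {w. length w = L \<and> right_special w}"
    using w'(2) right_special_inflate_iff assms by auto
next
  fix w' assume "w' \<in> inflate b ` {w. length w = L \<and> right_special w}"
  then obtain w where "w' = inflate b w" "length w = L" "right_special w" by auto
  moreover then have "w \<in> Sub_tau" by (simp add: right_special_def)
  ultimately show "w' \<in> {w'. length w' = 2 * L + b \<and> right_special w'}"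
    using right_special_inflate_iff assms by auto
qed

lemma omega_add_8_mult: "\<not> 8 dvd p \<Longrightarrow> omega (p + 8 * t) = omega p"
proof -
  assume "\<not> 8 dvd p"
  then have r: "0 < p mod 8" "p mod 8 < 2 ^ 3" by (simp_all add: mod_greater_zero_iff_not_dvd)
  have "p + 8 * t = 2 ^ 3 * (p div 8 + t) + p mod 8" "p = 2 ^ 3 * (p div 8) + p mod 8" by simp_all
  then show ?thesis using omega_periodic[OF r, of "p div 8 + t"] omega_periodic[OF r, of "p div 8"] by metis
qed

lemma omega_8_mult: "0 < k \<Longrightarrow> omega (8 * k) \<in> {omega 8, omega 16, omega 32}"
proof -
  assume "0 < k"
  have "omega 8 = Z" "omega 16 = X" "omega 32 = Y"
    using omega_pow2[of 3] omega_pow2[of 4] omega_pow2[of 5] by (simp_all add: numeral_eq_Suc)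
  moreover have "omega (8 * k) \<noteq> A" using \<open>0 < k\<close> by (simp add: omega_eq_A_iff)
  ultimately show ?thesis by (cases "omega (8 * k)") auto
qed

(* The window contains at most one multiple of 8; the other letters depend only on their
   position modulo 8, and a multiple of 8 carries the same letter as one of 8, 16, 32. *)
lemma factor_before_short_occurs_early:
  assumes "L \<le> 8" "L < e"
  shows "\<exists>e'. L < e' \<and> e' \<le> L + 32 \<and> factor_before e' L = factor_before e L"
proof -
  define p where "p = e - L"
  have "0 < p" using assms(2) by (simp add: p_def)
  have shift: "factor_before (q + L) L = factor_before e L"
    if "q + 8 * a = p + 8 * c" "\<forall>i<L. 8 dvd (p + i) \<longrightarrow> omega (q + i) = omega (p + i)" for q a c
  proof -
    have "omega (q + i) = omega (p + i)" if "i < L" for i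
    proof (cases "8 dvd (p + i)")
      case False
      moreover have "8 dvd (q + i) \<longleftrightarrow> 8 dvd (p + i)" using \<open>q + 8 * a = p + 8 * c\<close> by presburger
      moreover have "q + i + 8 * a = p + i + 8 * c" using \<open>q + 8 * a = p + 8 * c\<close> by simp
      ultimately show ?thesis by (metis omega_add_8_mult)
    qed (use that \<open>\<forall>i<L. 8 dvd (p + i) \<longrightarrow> _\<close> in blast)
    then show ?thesis using assms(2) by (simp add: factor_before_eq_iff p_def)
  qed
  show ?thesis
  proof (cases "\<exists>d<L. 8 dvd (p + d)")
    case True
    then obtain d k where d: "d < L" "p + d = 8 * k" by blast
    with \<open>0 < p\<close> have "0 < k" by simp
    then obtain k' where k': "k' \<in> {1, 2, 4}" "omega (8 * k') = omega (8 * k)"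
      using omega_8_mult[of k] by force
    define q where "q = 8 * k' - d"
    have q: "q + d = 8 * k'" "1 \<le> q" "q \<le> 32" using k' d assms(1) by (auto simp: q_def)
    have "omega (q + i) = omega (p + i)" if i: "i < L" "8 dvd (p + i)" for i
    proof -
      obtain j where "p + i = 8 * j" using i(2) by blast
      then have "i = d" using i(1) d assms(1) by presburger
      then show ?thesis using q(1) d(2) k'(2) by simp
    qed
    moreover have "q + 8 * k = p + 8 * k'" using q(1) d(2) by simp
    ultimately show ?thesis using shift[of q k k'] q(2,3) by (intro exI[of _ "q + L"]) auto
  next
    case False
    define q where "q = (if p mod 8 = 0 then 8 else p mod 8)"
    have "q + 8 * (p div 8) = p + 8 * (if p mod 8 = 0 then 1 else 0)" "1 \<le> q" "q \<le> 8"
      by (auto simp: q_def)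
    then show ?thesis using shift[of q] False by (intro exI[of _ "q + L"]) auto
  qed
qed

definition short_factors :: "nat \<Rightarrow> letter list list" where
  "short_factors m = map (\<lambda>e. factor_before e m) [Suc m..<m + 33]"

lemma set_short_factors: "m \<le> 8 \<Longrightarrow> set (short_factors m) = {w \<in> Sub_tau. length w = m}"
proof (intro set_eqI iffI)
  fix w assume "w \<in> set (short_factors m)"
  then show "w \<in> {w \<in> Sub_tau. length w = m}" by (auto simp: short_factors_def Sub_tau_iff Suc_le_eq)
next
  fix w assume "m \<le> 8" "w \<in> {w \<in> Sub_tau. length w = m}"
  then obtain e where "m < e" "factor_before e m = w" by (auto simp: Sub_tau_iff)
  then obtain e' where "m < e'" "e' \<le> m + 32" "factor_before e' m = w"
    using factor_before_short_occurs_early[OF \<open>m \<le> 8\<close>] by metis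
  then show "w \<in> set (short_factors m)"
    unfolding short_factors_def by (auto intro!: rev_image_eqI[of e'])
qed

lemma extensions_short:
  assumes "length w = L" "L \<le> 7"
  shows "extensions w = set [last u. u \<leftarrow> short_factors (Suc L), butlast u = w]"
proof -
  let ?F = "set (short_factors (Suc L))"
  have F: "?F = {u \<in> Sub_tau. length u = Suc L}" using assms(2) by (simp add: set_short_factors)
  have "s \<in> extensions w \<longleftrightarrow> (\<exists>u\<in>?F. butlast u = w \<and> last u = s)" for s
  proof
    assume "s \<in> extensions w"
    then have "w @ [s] \<in> ?F" using assms(1) by (simp add: F extensions_def)
    then show "\<exists>u\<in>?F. butlast u = w \<and> last u = s" by (intro bexI[of _ "w @ [s]"]) simp_all
  next
    assume "\<exists>u\<in>?F. butlast u = w \<and> last u = s"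
    then obtain u where u: "u \<in> ?F" "butlast u = w" "last u = s" by blast
    then have "u \<noteq> []" by (auto simp: F)
    then have "u = w @ [s]" using u(2,3) by (metis append_butlast_last_id)
    then show "s \<in> extensions w" using u(1) by (simp add: F extensions_def)
  qed
  then show ?thesis by auto
qed

lemma right_special_words_short:
  assumes "L \<le> 7"
  shows "{w. length w = L \<and> right_special w} = set [butlast u. u \<leftarrow> short_factors (Suc L),
    \<exists>v\<in>set (short_factors (Suc L)). butlast v = butlast u \<and> last v \<noteq> last u]"
    (is "_ = set [butlast u. u \<leftarrow> ?F, _]")
proof -
  have ext: "s \<in> extensions w \<longleftrightarrow> (\<exists>u\<in>set ?F. butlast u = w \<and> last u = s)" if "length w = L" for w s
    using extensions_short[OF that assms] by auto
  have len: "length u = Suc L" if "u \<in> set ?F" for u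
    using that assms by (simp add: set_short_factors)
  show ?thesis
  proof (intro set_eqI iffI)
    fix w assume "w \<in> {w. length w = L \<and> right_special w}"
    then obtain s t where "length w = L" "s \<noteq> t" "s \<in> extensions w" "t \<in> extensions w"
      by (auto simp: right_special_iff)
    then obtain u v where "u \<in> set ?F" "v \<in> set ?F" "butlast u = w" "butlast v = w" "last v \<noteq> last u"
      using ext by metis
    then show "w \<in> set [butlast u. u \<leftarrow> ?F, \<exists>v\<in>set ?F. butlast v = butlast u \<and> last v \<noteq> last u]"
      by auto
  next
    fix w assume "w \<in> set [butlast u. u \<leftarrow> ?F, \<exists>v\<in>set ?F. butlast v = butlast u \<and> last v \<noteq> last u]"
    then obtain u v where uv: "u \<in> set ?F" "v \<in> set ?F" "butlast u = w" "butlast v = w" "last v \<noteq> last u"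
      by auto
    then have "length w = L" using len by auto
    moreover have "last u \<in> extensions w" "last v \<in> extensions w" using uv ext[OF \<open>length w = L\<close>] by auto
    ultimately show "w \<in> {w. length w = L \<and> right_special w}"
      using uv(5) by (auto simp: right_special_iff)
  qed
qed

lemma dyadic_induct [consumes 3, case_names base step]:
  fixes n L :: nat
  assumes "2 \<le> n" "2 ^ n \<le> L" "L < 2 ^ (n + 1)"
    and base: "\<And>L. 4 \<le> L \<Longrightarrow> L < 8 \<Longrightarrow> P 2 L"
    and step: "\<And>n L b. 2 \<le> n \<Longrightarrow> 2 ^ n \<le> L \<Longrightarrow> L < 2 ^ (n + 1) \<Longrightarrow> b \<le> 1 \<Longrightarrow>
      P n L \<Longrightarrow> P (Suc n) (2 * L + b)"
  shows "P n L"
  using assms(1-3)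
proof (induction n arbitrary: L rule: nat_induct_at_least)
  case base
  then show ?case using assms(4) by simp
next
  case (Suc n)
  have "2 ^ n \<le> L div 2" "L div 2 < 2 ^ (n + 1)" using Suc.prems by auto
  then have "P (Suc n) (2 * (L div 2) + L mod 2)"
    using Suc.hyps Suc.IH by (intro step) auto
  then show ?case by simp
qed

lemma right_special_words_of_length:
  assumes "2 \<le> n" "2 ^ n \<le> L" "L < 2 ^ (n + 1)"
  shows "{w. length w = L \<and> right_special w} =
    (if 2 * L < 3 * 2 ^ n then {factor_before (2 ^ (n + 1)) L, factor_before (5 * 2 ^ n) L}
     else {factor_before (2 ^ (n + 1)) L})"
  using assms
proof (induction rule: dyadic_induct)
  case (base L)
  have computed: "\<forall>L\<in>set [4..<8]. set [butlast u. u \<leftarrow> short_factors (Suc L),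
      \<exists>v\<in>set (short_factors (Suc L)). butlast v = butlast u \<and> last v \<noteq> last u] =
    (if 2 * L < 3 * 2 ^ 2 then {factor_before (2 ^ (2 + 1)) L, factor_before (5 * 2 ^ 2) L}
     else {factor_before (2 ^ (2 + 1)) L})"
    by code_simp
  have L: "L \<in> set [4..<8]" "L \<le> 7" using base by (simp_all only: set_upt atLeastLessThan_iff)
  show ?case unfolding right_special_words_short[OF L(2)] using L(1) by (rule bspec[OF computed])
next
  case (step n L b)
  have "4 \<le> L" using step.hyps(1,2) power_increasing[of 2 n "2::nat"] by simp
  obtain h :: nat where "2 ^ n = 2 * h" using step.hyps(1) by (cases n) simp_all
  then have short_iff: "2 * (2 * L + b) < 3 * 2 ^ Suc n \<longleftrightarrow> 2 * L < 3 * 2 ^ n"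
    using step.hyps(4) by (simp only: power_Suc) presburger
  have "{w. length w = 2 * L + b \<and> right_special w} = inflate b ` {w. length w = L \<and> right_special w}"
    using \<open>4 \<le> L\<close> step.hyps(4) by (intro right_special_words_inflate) simp_all
  also have "\<dots> = (if 2 * L < 3 * 2 ^ n
      then {inflate b (factor_before (2 ^ (n + 1)) L), inflate b (factor_before (5 * 2 ^ n) L)}
      else {inflate b (factor_before (2 ^ (n + 1)) L)})"
    using step.IH by simp
  also have "\<dots> = (if 2 * (2 * L + b) < 3 * 2 ^ Suc n
      then {factor_before (2 ^ (Suc n + 1)) (2 * L + b), factor_before (5 * 2 ^ Suc n) (2 * L + b)}
      else {factor_before (2 ^ (Suc n + 1)) (2 * L + b)})"
    using step.hyps(3,4) short_iff factor_before_double[of L "2 ^ (n + 1)" b]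
      factor_before_double[of L "5 * 2 ^ n" b] by (simp add: mult_ac)
  finally show ?case .
qed

lemma extensions_factor_before_pow2:
  assumes "2 \<le> n" "2 ^ n \<le> L" "L < 2 ^ (n + 1)"
  shows "extensions (factor_before (2 ^ (n + 1)) L) = {X, Y, Z}"
  using assms
proof (induction rule: dyadic_induct)
  case (base L)
  have computed: "\<forall>L\<in>set [4..<8].
      set [last u. u \<leftarrow> short_factors (Suc L), butlast u = factor_before (2 ^ (2 + 1)) L] = {X, Y, Z}"
    by code_simp
  have L: "L \<in> set [4..<8]" "L \<le> 7" using base by (simp_all only: set_upt atLeastLessThan_iff)
  have len: "length (factor_before (2 ^ (2 + 1)) L) = L" using base by simp
  show ?case unfolding extensions_short[OF len L(2)] using L(1) by (rule bspec[OF computed])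
next
  case (step n L b)
  have "4 \<le> L" using step.hyps(1,2) power_increasing[of 2 n "2::nat"] by simp
  have "factor_before (2 ^ (Suc n + 1)) (2 * L + b) = inflate b (factor_before (2 ^ (n + 1)) L)"
    using step.hyps(3,4) factor_before_double[of L "2 ^ (n + 1)" b] by simp
  also have "extensions \<dots> = sigma ` {X, Y, Z}"
    using \<open>4 \<le> L\<close> step.hyps(3,4) step.IH
    by (simp add: extensions_inflate factor_before_in_Sub_tau)
  finally show ?case by auto
qed

lemma extensions_factor_before_5_pow2:
  assumes "2 \<le> n" "2 ^ n \<le> L" "L < 2 ^ (n + 1)" "2 * L < 3 * 2 ^ n"
  shows "extensions (factor_before (5 * 2 ^ n) L) = {(sigma ^^ n) Y, (sigma ^^ n) Z}"
  using assms
proof (induction rule: dyadic_induct)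
  case (base L)
  have computed: "\<forall>L\<in>set [4..<8]. 2 * L < 3 * 2 ^ 2 \<longrightarrow>
      set [last u. u \<leftarrow> short_factors (Suc L), butlast u = factor_before (5 * 2 ^ 2) L] =
      {(sigma ^^ 2) Y, (sigma ^^ 2) Z}"
    by code_simp
  have L: "L \<in> set [4..<8]" "L \<le> 7" using base by (simp_all only: set_upt atLeastLessThan_iff)
  have len: "length (factor_before (5 * 2 ^ 2) L) = L" using base by simp
  show ?case unfolding extensions_short[OF len L(2)]
    using bspec[OF computed L(1)] \<open>2 * L < 3 * 2 ^ 2\<close> by (rule mp)
next
  case (step n L b)
  have "4 \<le> L" using step.hyps(1,2) power_increasing[of 2 n "2::nat"] by simp
  have "2 * L < 3 * 2 ^ n" using step.prems by simp
  have "factor_before (5 * 2 ^ Suc n) (2 * L + b) = inflate b (factor_before (5 * 2 ^ n) L)"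
    using step.hyps(3,4) factor_before_double[of L "5 * 2 ^ n" b] by (simp add: mult_ac)
  also have "extensions \<dots> = sigma ` {(sigma ^^ n) Y, (sigma ^^ n) Z}"
    using \<open>4 \<le> L\<close> step.hyps(3,4) step.IH \<open>2 * L < 3 * 2 ^ n\<close>
    by (simp add: extensions_inflate factor_before_in_Sub_tau)
  finally show ?case by simp
qed

lemma funpow_tau_A_X_A:
  "(tau ^^ m) [A] @ (tau ^^ m) [X] @ (tau ^^ Suc m) [A] =
    factor_before (5 * 2 ^ (m + 2)) (3 * 2 ^ (m + 1) - 1)"
proof -
  define K :: nat where "K = 2 ^ (m + 1)"
  have "1 \<le> K" by (simp add: K_def)
  have first: "(tau ^^ m) [A] = factor_before (8 * K) (K - 1)"
    using factor_before_periodic[of 8 "m + 1"] by (simp add: funpow_tau_A K_def mult.commute)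
  have "(sigma ^^ 4) A = X" by (simp add: numeral_eq_Suc)
  then have "(sigma ^^ (m + 4)) A = (sigma ^^ m) X" by (simp add: funpow_add)
  then have middle: "(tau ^^ m) [X] = [omega (8 * K)]"
    using omega_pow2[of "m + 4"] by (simp add: funpow_tau_non_A K_def power_add mult.commute)
  have last: "(tau ^^ Suc m) [A] = factor_before (8 * K + 1 + (2 * K - 1)) (2 * K - 1)"
  proof -
    have "8 * K + 1 + (2 * K - 1) = 2 ^ (Suc m + 1) * 5" using \<open>1 \<le> K\<close> by (simp add: K_def)
    moreover have "2 * K - 1 = 2 ^ (Suc m + 1) - 1" by (simp add: K_def)
    ultimately show ?thesis
      using factor_before_periodic[of 5 "Suc m + 1"] funpow_tau_A[of "Suc m"] by (simp del: funpow.simps)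
  qed
  have prefix: "(tau ^^ m) [A] @ (tau ^^ m) [X] = factor_before (8 * K + 1) K"
    using first middle factor_before_Suc[of "8 * K" "K - 1"] \<open>1 \<le> K\<close> by simp
  have "(tau ^^ m) [A] @ (tau ^^ m) [X] @ (tau ^^ Suc m) [A] =
      factor_before (8 * K + 1) K @ factor_before (8 * K + 1 + (2 * K - 1)) (2 * K - 1)"
    using prefix last by (simp only: append_assoc[symmetric])
  also have "\<dots> = factor_before (8 * K + 1 + (2 * K - 1)) (K + (2 * K - 1))"
    by (rule factor_before_append) simp
  also have "\<dots> = factor_before (5 * 2 ^ (m + 2)) (3 * 2 ^ (m + 1) - 1)"
    using \<open>1 \<le> K\<close> by (simp add: K_def)
  finally show ?thesis .
qed

lemma funpow_tau_X:
  "(tau ^^ m) [X] = [(sigma ^^ (m + 2)) Y]" "(tau ^^ Suc m) [X] = [(sigma ^^ (m + 2)) Z]"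
  using funpow_tau_non_A[of X m] funpow_tau_non_A[of X "Suc m"] by (simp_all add: funpow_swap1)

theorem theorem2:
  fixes n k L :: nat
  assumes "n \<ge> 2" and "L = 2 ^ n + k" and "k < 2 ^ n"
  shows "(k < 2 ^ (n - 1) \<longrightarrow>
            (let w1 = suffix_len L ((tau ^^ n) [A]);
                 w2 = suffix_len L ((tau ^^ (n - 2)) [A] @ (tau ^^ (n - 2)) [X] @ (tau ^^ (n - 1)) [A])
             in {w. length w = L \<and> right_special w} = {w1, w2} \<and> w1 \<noteq> w2
                \<and> extensions w1 = {X, Y, Z}
                \<and> extensions w2 = {s. [s] = (tau ^^ (n - 2)) [X] \<or> [s] = (tau ^^ (n - 1)) [X]}))
       \<and> (2 ^ (n - 1) \<le> k \<longrightarrow>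
            {w. length w = L \<and> right_special w} = {suffix_len L ((tau ^^ n) [A])}
            \<and> extensions (suffix_len L ((tau ^^ n) [A])) = {X, Y, Z})"
proof -
  define m where "m = n - 2"
  have n: "n = m + 2" using assms(1) by (simp add: m_def)
  have L: "2 ^ n \<le> L" "L < 2 ^ (n + 1)" using assms(2,3) by simp_all
  have short_iff: "k < 2 ^ (n - 1) \<longleftrightarrow> 2 * L < 3 * 2 ^ n" using assms(2) by (simp add: n)
  have w1: "suffix_len L ((tau ^^ n) [A]) = factor_before (2 ^ (n + 1)) L"
    using L by (simp add: funpow_tau_A suffix_len_factor_before)
  have w2: "suffix_len L ((tau ^^ (n - 2)) [A] @ (tau ^^ (n - 2)) [X] @ (tau ^^ (n - 1)) [A])
      = factor_before (5 * 2 ^ n) L" if "2 * L < 3 * 2 ^ n"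
    using that funpow_tau_A_X_A[of m] by (simp add: n suffix_len_factor_before)
  have X_images: "{s. [s] = (tau ^^ (n - 2)) [X] \<or> [s] = (tau ^^ (n - 1)) [X]}
      = {(sigma ^^ n) Y, (sigma ^^ n) Z}"
    using funpow_tau_X[of m] by (auto simp: n)
  note RS = right_special_words_of_length[OF assms(1) L]
  note E1 = extensions_factor_before_pow2[OF assms(1) L]
  note E2 = extensions_factor_before_5_pow2[OF assms(1) L]
  have "{X, Y, Z} \<noteq> {a, b}" for a b by auto
  then have distinct: "factor_before (2 ^ (n + 1)) L \<noteq> factor_before (5 * 2 ^ n) L"
    if "2 * L < 3 * 2 ^ n"
    using E1 E2[OF that] by metis
  show ?thesis
  proof (cases "2 * L < 3 * 2 ^ n")
    case True
    then show ?thesis using RS E1 E2 distinct w1 w2 X_images short_iff by (auto simp: Let_def)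
  next
    case False
    then show ?thesis using RS E1 w1 short_iff by (auto simp: Let_def)
  qed
qed

end
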